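(* Let $\overrightarrow{W}$ be a Morse sequence on a simplicial complex $K$. Then for every $p$: (1) $H_p(\overline O)$ and $H_p(\widehat W)$ are isomorphic vector spaces; (2) $H^p(\underline O)$ and $H^p(\widehat W)$ are isomorphic vector spaces.
   Context: A simplicial complex $K$ is a finite collection of non-empty finite sets closed under taking non-empty subsets; $\dim\sigma=|\sigma|-1$, $K^{(p)}$ the set of $p$-simplices. A pair $(\sigma,\tau)$ with $\sigma\subsetneq\tau$ is a free pair for $K$ if $\tau$ is the only simplex other than $\sigma$ containing $\sigma$; $K$ is then an elementary expansion of $K\setminus\{\sigma,\tau\}$. If $\nu$ is a facet (maximal simplex) of $K$, $K$ is an elementary filling of $K\setminus\{\nu\}$. A Morse sequence on $K$ is a sequence $\langle\emptyset=K_0,\dots,K_k=K\rangle$ with each $K_i$ an elementary expansion or filling of $K_{i-1}$; simplices added by fillings are critical; for an expansion $K_i=K_{i-1}\cup\{\sigma,\tau\}$, $\sigma\subset\tau$, $\sigma$ is lower regular and $\tau$ upper regular. $\widehat W$ is the set of critical simplices. $K[p]$ is the $\mathbb{Z}_2$-vector space of subsets of $K^{(p)}$ (sum = symmetric difference, $0=\emptyset$), $\widehat W[p]=\{c\in K[p]:c\subseteq\widehat W\}$. For $\sigma\in K^{(p)}$, $\partial(\sigma)=\{\tau\in K^{(p-1)}:\tau\subset\sigma\}$, $\delta(\sigma)=\{\tau\in K^{(p+1)}:\sigma\subset\tau\}$, with linear extensions $\partial_p,\delta_p$. The reference map $\curlywedge$ is the unique map assigning to each $p$-simplex an element of $\widehat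 W[p]$, extended linearly, with $\curlywedge(\nu)=\{\nu\}$ for critical $\nu$ and $\curlywedge(\tau)=0=\curlywedge(\partial(\tau))$ for upper regular $\tau$; the coreference map $\curlyvee$ is the unique such map with $\curlyvee(\nu)=\{\nu\}$ for critical $\nu$ and $\curlyvee(\sigma)=0=\curlyvee(\delta(\sigma))$ for lower regular $\sigma$. Critical complex: $(\widehat W[p],\widehat\partial_p)$ with $\widehat\partial_p(c)=\curlywedge(\partial_p(c))$; cocritical complex $(\widehat W[p],\widehat\delta_p)$ with $\widehat\delta_p(c)=\curlyvee(\delta_p(c))$; $H_p(\widehat W)$ and $H^p(\widehat W)$ are their (co)homology spaces. Extension maps: $\widetilde\curlywedge_p,\widetilde\curlyvee_p:\widehat W[p]\to K[p]$ linear with $\widetilde\curlywedge(\kappa)=\{\nu\in K:\kappa\in\curlyvee(\nu)\}$, $\widetilde\curlyvee(\kappa)=\{\nu\in K:\kappa\in\curlywedge(\nu)\}$ for critical $p$-simplices $\kappa$. $\overline O[p]=\operatorname{im}\widetilde\curlywedge_p$ and $\underline O[p]=\operatorname{im}\widetilde\curlyvee_p$. The extension complex is the chain complex $(\overline O[p],\partial_p)$ and the coextension complex the cochain complex $(\underline O[p],\delta_p)$ (here $\partial_p$ maps $\overline O[p]$ into $\overline O[p-1]$ and $\delta_p$ maps $\underline O[p]$ into $\underline O[p+1]$); $H_p(\overline O)$ and $H^p(\underline O)$ denote their homology and cohomology spaces. *)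

theory Defs
  imports Main "HOL-Algebra.Coset"
begin

definition simplicial_complex :: "'v set set \<Rightarrow> bool" where
  "simplicial_complex K \<longleftrightarrow> finite K \<and> (\<forall>\<sigma>\<in>K. \<sigma> \<noteq> {} \<and> finite \<sigma>) \<and>
     (\<forall>\<sigma>\<in>K. \<forall>\<tau>. \<tau> \<noteq> {} \<and> \<tau> \<subseteq> \<sigma> \<longrightarrow> \<tau> \<in> K)"

definition simplices :: "'v set set \<Rightarrow> nat \<Rightarrow> 'v set set" where
  "simplices K p = {\<sigma>\<in>K. card \<sigma> = Suc p}"

definition free_pair :: "'v set set \<Rightarrow> 'v set \<Rightarrow> 'v set \<Rightarrow> bool" where
  "free_pair K \<sigma> \<tau> \<longleftrightarrow> \<sigma> \<in> K \<and> \<tau> \<in> K \<and> \<sigma> \<subset> \<tau> \<and> (\<forall>\<rho>\<in>K. \<sigma> \<subseteq> \<rho> \<longrightarrow> \<rho> = \<sigma> \<or> \<rho> = \<tau>)"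

definition facet :: "'v set set \<Rightarrow> 'v set \<Rightarrow> bool" where
  "facet K \<nu> \<longleftrightarrow> \<nu> \<in> K \<and> (\<forall>\<rho>\<in>K. \<nu> \<subseteq> \<rho> \<longrightarrow> \<rho> = \<nu>)"

definition elem_expansion :: "'v set set \<Rightarrow> 'v set set \<Rightarrow> 'v set \<Rightarrow> 'v set \<Rightarrow> bool" where
  "elem_expansion L K' \<sigma> \<tau> \<longleftrightarrow> simplicial_complex K' \<and> free_pair K' \<sigma> \<tau> \<and> L = K' - {\<sigma>, \<tau>}"

definition elem_filling :: "'v set set \<Rightarrow> 'v set set \<Rightarrow> 'v set \<Rightarrow> bool" where
  "elem_filling L K' \<nu> \<longleftrightarrow> simplicial_complex K' \<and> facet K' \<nu> \<and> L = K' - {\<nu>}"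

definition morse_seq :: "'v set set \<Rightarrow> 'v set set list \<Rightarrow> bool" where
  "morse_seq K Ks \<longleftrightarrow> Ks \<noteq> [] \<and> hd Ks = {} \<and> last Ks = K \<and>
     (\<forall>i. Suc i < length Ks \<longrightarrow>
        (\<exists>\<sigma> \<tau>. elem_expansion (Ks!i) (Ks!Suc i) \<sigma> \<tau>) \<or> (\<exists>\<nu>. elem_filling (Ks!i) (Ks!Suc i) \<nu>))"

definition critical :: "'v set set list \<Rightarrow> 'v set set" where
  "critical Ks = {\<nu>. \<exists>i. Suc i < length Ks \<and> elem_filling (Ks!i) (Ks!Suc i) \<nu>}"

definition lower_regular :: "'v set set list \<Rightarrow> 'v set set" where
  "lower_regular Ks = {\<sigma>. \<exists>i \<tau>. Suc i < length Ks \<and> elem_expansion (Ks!i) (Ks!Suc i) \<sigma> \<tau>}"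

definition upper_regular :: "'v set set list \<Rightarrow> 'v set set" where
  "upper_regular Ks = {\<tau>. \<exists>i \<sigma>. Suc i < length Ks \<and> elem_expansion (Ks!i) (Ks!Suc i) \<sigma> \<tau>}"

text \<open>Chains are sets of simplices; the sum is symmetric difference, zero is the empty set.\<close>
definition cadd :: "'a set \<Rightarrow> 'a set \<Rightarrow> 'a set" where
  "cadd A B = (A - B) \<union> (B - A)"

text \<open>Linear (Z_2) extension of a map from simplices to chains.\<close>
definition lin :: "('a \<Rightarrow> 'b set) \<Rightarrow> 'a set \<Rightarrow> 'b set" where
  "lin f c = {\<nu>. odd (card {\<sigma>\<in>c. \<nu> \<in> f \<sigma>})}"

definition chains :: "'v set set \<Rightarrow> nat \<Rightarrow> 'v set set set" where
  "chains K p = Pow (simplices K p)"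

definition bd :: "'v set set \<Rightarrow> 'v set \<Rightarrow> 'v set set" where
  "bd K \<sigma> = {\<tau>\<in>K. \<tau> \<subset> \<sigma> \<and> Suc (card \<tau>) = card \<sigma>}"

definition cbd :: "'v set set \<Rightarrow> 'v set \<Rightarrow> 'v set set" where
  "cbd K \<sigma> = {\<tau>\<in>K. \<sigma> \<subset> \<tau> \<and> Suc (card \<sigma>) = card \<tau>}"

text \<open>W-hat[p]: chains of critical p-simplices.\<close>
definition crit_chains :: "'v set set \<Rightarrow> 'v set set list \<Rightarrow> nat \<Rightarrow> 'v set set set" where
  "crit_chains K Ks p = Pow (simplices K p \<inter> critical Ks)"

definition is_reference :: "'v set set \<Rightarrow> 'v set set list \<Rightarrow> ('v set \<Rightarrow> 'v set set) \<Rightarrow> bool" where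
  "is_reference K Ks f \<longleftrightarrow>
     (\<forall>\<sigma>. \<sigma> \<notin> K \<longrightarrow> f \<sigma> = {}) \<and>
     (\<forall>p. \<forall>\<sigma>\<in>simplices K p. f \<sigma> \<in> crit_chains K Ks p) \<and>
     (\<forall>\<nu>\<in>critical Ks. f \<nu> = {\<nu>}) \<and>
     (\<forall>\<tau>\<in>upper_regular Ks. f \<tau> = {} \<and> lin f (bd K \<tau>) = {})"

definition is_coreference :: "'v set set \<Rightarrow> 'v set set list \<Rightarrow> ('v set \<Rightarrow> 'v set set) \<Rightarrow> bool" where
  "is_coreference K Ks f \<longleftrightarrow>
     (\<forall>\<sigma>. \<sigma> \<notin> K \<longrightarrow> f \<sigma> = {}) \<and>
     (\<forall>p. \<forall>\<sigma>\<in>simplices K p. f \<sigma> \<in> crit_chains K Ks p) \<and>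
     (\<forall>\<nu>\<in>critical Ks. f \<nu> = {\<nu>}) \<and>
     (\<forall>\<sigma>\<in>lower_regular Ks. f \<sigma> = {} \<and> lin f (cbd K \<sigma>) = {})"

definition reference :: "'v set set \<Rightarrow> 'v set set list \<Rightarrow> 'v set \<Rightarrow> 'v set set" where
  "reference K Ks = (THE f. is_reference K Ks f)"

definition coreference :: "'v set set \<Rightarrow> 'v set set list \<Rightarrow> 'v set \<Rightarrow> 'v set set" where
  "coreference K Ks = (THE f. is_coreference K Ks f)"

definition crit_bd :: "'v set set \<Rightarrow> 'v set set list \<Rightarrow> 'v set set \<Rightarrow> 'v set set" where
  "crit_bd K Ks c = lin (reference K Ks) (lin (bd K) c)"

definition crit_cbd :: "'v set set \<Rightarrow> 'v set set list \<Rightarrow> 'v set set \<Rightarrow> 'v set set" where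
  "crit_cbd K Ks c = lin (coreference K Ks) (lin (cbd K) c)"

definition ext_ref :: "'v set set \<Rightarrow> 'v set set list \<Rightarrow> 'v set \<Rightarrow> 'v set set" where
  "ext_ref K Ks \<kappa> = {\<nu>\<in>K. \<kappa> \<in> coreference K Ks \<nu>}"

definition ext_coref :: "'v set set \<Rightarrow> 'v set set list \<Rightarrow> 'v set \<Rightarrow> 'v set set" where
  "ext_coref K Ks \<kappa> = {\<nu>\<in>K. \<kappa> \<in> reference K Ks \<nu>}"

text \<open>O-bar[p] = image of the extension map on W-hat[p]; O-underline[p] likewise.\<close>
definition ext_chains :: "'v set set \<Rightarrow> 'v set set list \<Rightarrow> nat \<Rightarrow> 'v set set set" where
  "ext_chains K Ks p = lin (ext_ref K Ks) ` crit_chains K Ks p"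

definition coext_chains :: "'v set set \<Rightarrow> 'v set set list \<Rightarrow> nat \<Rightarrow> 'v set set set" where
  "coext_chains K Ks p = lin (ext_coref K Ks) ` crit_chains K Ks p"

text \<open>The additive group of a Z_2-vector space of chains. A Z_2-linear isomorphism
  is the same thing as an isomorphism of the underlying additive groups.\<close>
definition chain_grp :: "'a set set \<Rightarrow> 'a set monoid" where
  "chain_grp C = \<lparr>carrier = C, mult = cadd, one = {}\<rparr>"

definition homology :: "(nat \<Rightarrow> 'a set set) \<Rightarrow> ('a set \<Rightarrow> 'a set) \<Rightarrow> nat \<Rightarrow> 'a set set monoid" where
  "homology C d p = chain_grp {c\<in>C p. d c = {}} Mod (d ` C (Suc p))"

definition cohomology :: "(nat \<Rightarrow> 'a set set) \<Rightarrow> ('a set \<Rightarrow> 'a set) \<Rightarrow> nat \<Rightarrow> 'a set set monoid" where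
  "cohomology C d p = chain_grp {c\<in>C p. d c = {}} Mod (if p = 0 then {{}} else d ` C (p - 1))"

end

theory Submission
  imports Defs
begin

(*
  The reference map of a Morse sequence is determined step by step along the sequence, and
  it satisfies (ref o d o ref) = (ref o d).  The image of the extension map consists exactly
  of the chains that contain no lower regular simplex and whose boundary contains none either.
  This space is closed under the boundary, and restriction to the critical simplices maps it
  bijectively onto the critical chains, the extension map being the inverse.  By the identity
  above, restriction intertwines the boundary with the critical boundary, so the extension
  complex and the critical complex are isomorphic chain complexes.  Reversing the order of the
  sequence exchanges boundary and coboundary, upper and lower regular simplices, and reference
  and coreference maps; the same argument then gives the statement for cohomology.
*)

section \<open>Chains over \<open>Z\<^sub>2\<close>\<close>

lemma mem_cadd: "x \<in> cadd a b \<longleftrightarrow> (x \<in> a) \<noteq> (x \<in> b)"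
  by (auto simp: cadd_def)

lemma cadd_self [simp]: "cadd a a = {}"
  and cadd_empty [simp]: "cadd a {} = a" "cadd {} a = a"
  by (auto simp: cadd_def)

lemma cadd_eq_empty_iff: "cadd a b = {} \<longleftrightarrow> a = b"
  by (auto simp: cadd_def)

lemma cadd_Int: "cadd a b \<inter> c = cadd (a \<inter> c) (b \<inter> c)"
  by (auto simp: cadd_def)

lemma even_card_cadd_iff:
  assumes "finite a" "finite b"
  shows "even (card (cadd a b)) \<longleftrightarrow> (even (card a) \<longleftrightarrow> even (card b))"
proof -
  have "cadd a b = (a \<union> b) - (a \<inter> b)"
    by (auto simp: cadd_def)
  moreover have "a \<inter> b \<subseteq> a \<union> b"
    by blast
  ultimately have "card (cadd a b) + 2 * card (a \<inter> b) = card a + card b"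
    using assms card_Un_Int[of a b] card_Diff_subset[of "a \<inter> b" "a \<union> b"]
      card_mono[of "a \<union> b" "a \<inter> b"] by simp
  then show ?thesis
    by presburger
qed

lemma lin_empty [simp]: "lin f {} = {}"
  by (simp add: lin_def)

lemma lin_zero [simp]: "lin (\<lambda>_. {}) c = {}"
  by (simp add: lin_def)

lemma lin_insert:
  assumes "finite c" "x \<notin> c"
  shows "lin f (insert x c) = cadd (f x) (lin f c)"
proof (rule Set.set_eqI)
  fix y
  have "{s \<in> insert x c. y \<in> f s} = (if y \<in> f x then insert x {s \<in> c. y \<in> f s} else {s \<in> c. y \<in> f s})"
    by auto
  then show "y \<in> lin f (insert x c) \<longleftrightarrow> y \<in> cadd (f x) (lin f c)"
    using assms by (simp add: lin_def mem_cadd)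
qed

lemma lin_singleton [simp]: "lin f {x} = f x"
  using lin_insert[of "{}" x f] by simp

lemma lin_remove:
  assumes "finite c" "x \<in> c"
  shows "lin f c = cadd (f x) (lin f (c - {x}))"
  using assms lin_insert[of "c - {x}" x f] by (simp add: insert_absorb)

lemma lin_eq_emptyD:
  assumes "finite c" "x \<in> c" "lin f c = {}"
  shows "f x = lin f (c - {x})"
  using assms lin_remove[of c x f] by (simp add: cadd_eq_empty_iff)

lemma lin_cong: "(\<And>x. x \<in> c \<Longrightarrow> f x = g x) \<Longrightarrow> lin f c = lin g c"
  unfolding lin_def by (metis (mono_tags, lifting) Collect_cong mem_Collect_eq)

lemma lin_cadd:
  assumes "finite a" "finite b"
  shows "lin f (cadd a b) = cadd (lin f a) (lin f b)"
proof (rule Set.set_eqI)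
  fix y
  have "{s \<in> cadd a b. y \<in> f s} = cadd {s \<in> a. y \<in> f s} {s \<in> b. y \<in> f s}"
    by (auto simp: cadd_def)
  then show "y \<in> lin f (cadd a b) \<longleftrightarrow> y \<in> cadd (lin f a) (lin f b)"
    using assms even_card_cadd_iff[of "{s \<in> a. y \<in> f s}" "{s \<in> b. y \<in> f s}"]
    by (simp add: lin_def mem_cadd)
qed

lemma lin_subset_UN: "lin f c \<subseteq> (\<Union>x\<in>c. f x)"
  by (auto simp: lin_def) (metis (mono_tags, lifting) card.empty empty_Collect_eq even_zero)

lemma finite_lin: "finite c \<Longrightarrow> (\<And>x. x \<in> c \<Longrightarrow> finite (f x)) \<Longrightarrow> finite (lin f c)"
  using lin_subset_UN by (metis finite_UN_I finite_subset)

lemma lin_lin: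
  assumes "finite c" "\<And>x. x \<in> c \<Longrightarrow> finite (g x)"
  shows "lin f (lin g c) = lin (\<lambda>x. lin f (g x)) c"
  using assms
proof (induction c rule: finite_induct)
  case (insert x c)
  have "finite (lin g c)"
    using insert by (intro finite_lin) auto
  then show ?case
    using insert by (simp add: lin_insert lin_cadd)
qed simp

definition z2_subspace :: "'a set set \<Rightarrow> bool" where
  "z2_subspace A \<longleftrightarrow> {} \<in> A \<and> (\<forall>x\<in>A. \<forall>y\<in>A. cadd x y \<in> A)"

lemma z2_subspace_image:
  assumes "z2_subspace A" and "\<And>x y. x \<in> A \<Longrightarrow> y \<in> A \<Longrightarrow> \<phi> (cadd x y) = cadd (\<phi> x) (\<phi> y)"
  shows "z2_subspace (\<phi> ` A)"
proof -
  have "{} \<in> A"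
    using assms(1) by (simp add: z2_subspace_def)
  then have "\<phi> {} = {}"
    using assms(2)[of "{}" "{}"] by simp
  then show ?thesis
    using assms unfolding z2_subspace_def by (metis image_iff)
qed

lemma z2_subspace_Pow: "z2_subspace (Pow S)"
  by (auto simp: z2_subspace_def cadd_def)

lemma z2_subspace_kernel:
  assumes "z2_subspace A" and "\<And>x y. x \<in> A \<Longrightarrow> y \<in> A \<Longrightarrow> f (cadd x y) = cadd (f x) (f y)"
  shows "z2_subspace {x \<in> A. f x = {}}"
  using assms unfolding z2_subspace_def by (metis (mono_tags, lifting) cadd_self mem_Collect_eq)

lemma lin_in_z2_subspace:
  assumes "z2_subspace A" "finite c" "\<And>x. x \<in> c \<Longrightarrow> f x \<in> A"
  shows "lin f c \<in> A"
  using assms(2,3)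
proof (induction c rule: finite_induct)
  case (insert x c)
  then show ?case
    using assms(1) by (simp add: lin_insert z2_subspace_def)
qed (use assms(1) in \<open>simp add: z2_subspace_def\<close>)

lemma comm_group_chain_grp: "z2_subspace A \<Longrightarrow> comm_group (chain_grp A)"
  by (rule comm_groupI) (auto simp: chain_grp_def z2_subspace_def cadd_def intro!: bexI)

lemma subgroup_chain_grp:
  assumes "z2_subspace A" "z2_subspace N" "N \<subseteq> A"
  shows "subgroup N (chain_grp A)"
proof -
  interpret comm_group "chain_grp A"
    using assms(1) by (rule comm_group_chain_grp)
  have "inv\<^bsub>chain_grp A\<^esub> x = x" if "x \<in> A" for x
    using that by (intro inv_equality) (auto simp: chain_grp_def)
  then show ?thesis
    using assms by (intro subgroupI) (auto simp: chain_grp_def z2_subspace_def)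
qed

lemma chain_grp_Mod_iso:
  assumes A: "z2_subspace A" and N: "z2_subspace N" "N \<subseteq> A"
    and inj: "inj_on \<phi> A"
    and add: "\<And>x y. x \<in> A \<Longrightarrow> y \<in> A \<Longrightarrow> \<phi> (cadd x y) = cadd (\<phi> x) (\<phi> y)"
  shows "chain_grp A Mod N \<cong> chain_grp (\<phi> ` A) Mod (\<phi> ` N)"
proof -
  let ?G = "chain_grp A" and ?H = "chain_grp (\<phi> ` A)"
  have A': "z2_subspace (\<phi> ` A)"
    using A add by (rule z2_subspace_image)
  have N': "z2_subspace (\<phi> ` N)"
    using N add by (intro z2_subspace_image) blast+
  interpret B: comm_group ?H
    using A' by (rule comm_group_chain_grp)
  have sub: "subgroup (\<phi> ` N) ?H"
    using subgroup_chain_grp[OF A' N'] N(2) by blast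
  then interpret normal "\<phi> ` N" ?H
    by (rule B.subgroup_imp_normal)
  let ?h = "\<lambda>a. \<phi> ` N #>\<^bsub>?H\<^esub> \<phi> a"
  have "\<phi> \<in> hom ?G ?H"
    using add by (auto simp: hom_def chain_grp_def)
  then have "?h \<in> hom ?G (?H Mod \<phi> ` N)"
    using hom_compose[OF _ r_coset_hom_Mod] by (simp add: comp_def)
  then interpret group_hom ?G "?H Mod \<phi> ` N" ?h
    using comm_group_chain_grp[OF A] factorgroup_is_group
    by (simp add: group_hom_def group_hom_axioms_def comm_group_def)
  have onto: "?h ` carrier ?G = carrier (?H Mod \<phi> ` N)"
    by (auto simp: carrier_FactGroup RCOSETS_def chain_grp_def)
  have "kernel ?G (?H Mod \<phi> ` N) ?h = {a \<in> A. \<phi> a \<in> \<phi> ` N}"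
    using B.rcos_self[OF _ sub] subgroup.rcos_const[OF sub B.is_group]
    by (auto simp: kernel_def chain_grp_def)
  also have "\<dots> = N"
    using inj N(2) by (auto simp: inj_on_def)
  finally show ?thesis
    using FactGroup_iso[OF onto] by simp
qed

section \<open>Acyclic matchings and their reference maps\<close>

definition is_reference_map ::
    "'a set \<Rightarrow> ('a \<Rightarrow> 'a set) \<Rightarrow> 'a set \<Rightarrow> 'a set \<Rightarrow> ('a \<Rightarrow> nat) \<Rightarrow> ('a \<Rightarrow> 'a set) \<Rightarrow> bool" where
  "is_reference_map K d C H dm f \<longleftrightarrow>
     (\<forall>x. x \<notin> K \<longrightarrow> f x = {}) \<and> (\<forall>x\<in>K. f x \<subseteq> {c\<in>C. dm c = dm x}) \<and>
     (\<forall>c\<in>C. f c = {c}) \<and> (\<forall>h\<in>H. f h = {} \<and> lin f (d h) = {})"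

text \<open>An abstract version of the structure that a Morse sequence induces on its complex:
  cells \<open>K\<close> with boundary \<open>d\<close> and its transpose \<open>cd\<close>, split into critical cells \<open>C\<close>,
  heads \<open>H\<close> (upper regular) and tails \<open>T\<close> (lower regular), each head being matched with
  the tail \<open>partner h\<close> in its boundary.  The rank \<open>rk\<close> plays the role of the step of the
  sequence: no face comes after its coface, and only matched pairs share a rank.\<close>

locale acyclic_matching =
  fixes K :: "'a set" and d cd :: "'a \<Rightarrow> 'a set" and C H T :: "'a set"
    and partner :: "'a \<Rightarrow> 'a" and rk dm :: "'a \<Rightarrow> nat"
  assumes finite_K: "finite K"
    and d_subset: "x \<in> K \<Longrightarrow> d x \<subseteq> K" and cd_subset: "x \<in> K \<Longrightarrow> cd x \<subseteq> K"
    and d_iff_cd: "x \<in> K \<Longrightarrow> y \<in> K \<Longrightarrow> y \<in> d x \<longleftrightarrow> x \<in> cd y"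
    and d_d: "x \<in> K \<Longrightarrow> lin d (d x) = {}" and cd_cd: "x \<in> K \<Longrightarrow> lin cd (cd x) = {}"
    and dm_d: "x \<in> K \<Longrightarrow> y \<in> d x \<Longrightarrow> z \<in> d x \<Longrightarrow> dm y = dm z"
    and dm_cd: "x \<in> K \<Longrightarrow> y \<in> cd x \<Longrightarrow> z \<in> cd x \<Longrightarrow> dm y = dm z"
    and K_eq: "K = C \<union> H \<union> T"
    and disjoint: "C \<inter> H = {}" "C \<inter> T = {}" "H \<inter> T = {}"
    and bij_partner: "bij_betw partner H T"
    and partner_in_d: "h \<in> H \<Longrightarrow> partner h \<in> d h"
    and rk_partner: "h \<in> H \<Longrightarrow> rk (partner h) = rk h"
    and rk_d: "x \<in> K \<Longrightarrow> y \<in> d x \<Longrightarrow> rk y \<le> rk x"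
    and rk_d_eq: "x \<in> K \<Longrightarrow> y \<in> d x \<Longrightarrow> rk y = rk x \<Longrightarrow> x \<in> H \<and> y = partner x"
begin

lemma C_subset_K: "C \<subseteq> K" and H_subset_K: "H \<subseteq> K"
  using K_eq by blast+

lemma K_cases: "x \<in> K \<Longrightarrow> x \<in> C \<or> x \<in> H \<or> x \<in> T"
  using K_eq by blast

lemma finite_subset_K: "X \<subseteq> K \<Longrightarrow> finite X"
  using finite_K finite_subset by blast

lemma finite_d: "x \<in> K \<Longrightarrow> finite (d x)"
  using d_subset finite_subset_K by blast

lemma lin_cd_subset: "X \<subseteq> K \<Longrightarrow> lin cd X \<subseteq> K"
  using lin_subset_UN[of cd X] cd_subset by blast

lemma rk_d_less: "h \<in> H \<Longrightarrow> y \<in> d h - {partner h} \<Longrightarrow> rk y < rk h"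
proof -
  assume h: "h \<in> H" and y: "y \<in> d h - {partner h}"
  have "h \<in> K"
    using h H_subset_K by blast
  then show "rk y < rk h"
    using rk_d[of h y] rk_d_eq[of h y] y by force
qed

lemma partner_in_T: "h \<in> H \<Longrightarrow> partner h \<in> T"
  using bij_partner by (auto simp: bij_betw_def)

lemma matching_induct [consumes 1, case_names critical head tail]:
  assumes "x \<in> K"
    and critical: "\<And>c. c \<in> C \<Longrightarrow> P c"
    and head: "\<And>h. h \<in> H \<Longrightarrow> P h"
    and tail: "\<And>h. h \<in> H \<Longrightarrow> (\<And>y. y \<in> d h - {partner h} \<Longrightarrow> P y) \<Longrightarrow> P (partner h)"
  shows "P x"
  using assms(1)
proof (induction "rk x" arbitrary: x rule: less_induct)
  case less
  consider "x \<in> C" | "x \<in> H" | "x \<in> T"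
    using less.prems K_cases by blast
  then show ?case
  proof cases
    case 3
    then obtain h where h: "h \<in> H" "x = partner h"
      using bij_partner by (auto simp: bij_betw_def)
    have "P y" if "y \<in> d h - {partner h}" for y
    proof (rule less.hyps)
      show "rk y < rk x"
        using rk_d_less[OF h(1) that] rk_partner[OF h(1)] h(2) by simp
      show "y \<in> K"
        using that h(1) d_subset K_eq by blast
    qed
    then show ?thesis
      using tail h by blast
  qed (use critical head in blast)+
qed

lemma dual_matching:
  "acyclic_matching K cd d C T H (inv_into H partner) (\<lambda>x. Max (rk ` K) - rk x) dm"
proof -
  have head: "inv_into H partner t \<in> H" "partner (inv_into H partner t) = t" if "t \<in> T" for t
    using that bij_partner bij_betw_inv_into_right inv_into_into by (fastforce simp: bij_betw_def)+
  have rk_le_Max: "rk x \<le> Max (rk ` K)" if "x \<in> K" for x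
    using that finite_K by simp
  show ?thesis
  proof
    show "inv_into H partner t \<in> cd t" if "t \<in> T" for t
      using head[OF that] partner_in_d[of "inv_into H partner t"] d_iff_cd K_eq that by auto
    show "Max (rk ` K) - rk (inv_into H partner t) = Max (rk ` K) - rk t" if "t \<in> T" for t
      using head[OF that] rk_partner by metis
    fix x y assume x: "x \<in> K" and y: "y \<in> cd x"
    then have "y \<in> K" "x \<in> d y"
      using cd_subset d_iff_cd by blast+
    then show "Max (rk ` K) - rk y \<le> Max (rk ` K) - rk x"
      using rk_d by (simp add: diff_le_mono2)
    assume "Max (rk ` K) - rk y = Max (rk ` K) - rk x"
    then have "rk x = rk y"
      using rk_le_Max[OF x] rk_le_Max[OF \<open>y \<in> K\<close>] by linarith
    then have "y \<in> H" "x = partner y"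
      using rk_d_eq[OF \<open>y \<in> K\<close> \<open>x \<in> d y\<close>] by auto
    then show "x \<in> T \<and> y = inv_into H partner x"
      using partner_in_T bij_partner by (simp add: bij_betw_def)
  next
    show "bij_betw (inv_into H partner) T H"
      using bij_partner by (rule bij_betw_inv_into)
    show "K = C \<union> T \<union> H"
      using K_eq by blast
    show "x \<in> K \<Longrightarrow> y \<in> K \<Longrightarrow> y \<in> cd x \<longleftrightarrow> x \<in> d y" for x y
      using d_iff_cd by blast
  qed (use finite_K d_subset cd_subset d_d cd_cd dm_d dm_cd disjoint in blast)+
qed

text \<open>The reference map is built rank by rank: \<open>ref_upto n\<close> is defined on the cells of rank
  \<open>< n\<close>, and a tail \<open>partner h\<close> takes the value forced by \<open>lin f (d h) = {}\<close>, which only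
  involves cells of smaller rank.\<close>

primrec ref_upto :: "nat \<Rightarrow> 'a \<Rightarrow> 'a set" where
  "ref_upto 0 x = {}"
| "ref_upto (Suc n) x =
     (if x \<in> K \<and> rk x = n then
        if x \<in> C then {x}
        else if x \<in> T then lin (ref_upto n) (d (inv_into H partner x) - {x})
        else {}
      else ref_upto n x)"

definition ref_map :: "'a \<Rightarrow> 'a set" where
  "ref_map x = ref_upto (Suc (rk x)) x"

lemma ref_upto_eq: "ref_upto n x = (if rk x < n then ref_map x else {})"
proof (induction n)
  case (Suc n)
  show ?case
  proof (cases "rk x = n")
    case True
    then show ?thesis
      by (simp only: ref_map_def) simp
  next
    case False
    then show ?thesis
      using Suc by simp
  qed
qed simp

lemma ref_map_outside: "x \<notin> K \<Longrightarrow> ref_map x = {}"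
  using ref_upto_eq[of "rk x" x] by (simp add: ref_map_def)

lemma ref_map_critical: "c \<in> C \<Longrightarrow> ref_map c = {c}"
proof -
  assume "c \<in> C"
  moreover have "c \<in> K"
    using \<open>c \<in> C\<close> C_subset_K by blast
  ultimately show ?thesis
    by (simp add: ref_map_def)
qed

lemma ref_map_head: "h \<in> H \<Longrightarrow> ref_map h = {}"
proof -
  assume "h \<in> H"
  moreover have "h \<in> K" "h \<notin> C" "h \<notin> T"
    using \<open>h \<in> H\<close> K_eq disjoint by blast+
  ultimately show ?thesis
    by (simp add: ref_map_def)
qed

lemma ref_map_tail:
  assumes h: "h \<in> H"
  shows "ref_map (partner h) = lin ref_map (d h - {partner h})"
proof -
  have "partner h \<in> K" "partner h \<in> T" "partner h \<notin> C"
    using partner_in_T[OF h] K_eq disjoint by blast+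
  moreover have "inv_into H partner (partner h) = h"
    using h bij_partner by (simp add: bij_betw_def)
  ultimately have "ref_map (partner h) = lin (ref_upto (rk h)) (d h - {partner h})"
    by (simp add: ref_map_def rk_partner[OF h])
  also have "\<dots> = lin ref_map (d h - {partner h})"
    using rk_d_less[OF h] by (intro lin_cong) (simp add: ref_upto_eq)
  finally show ?thesis .
qed

lemma lin_ref_map_d_head:
  assumes h: "h \<in> H"
  shows "lin ref_map (d h) = {}"
proof -
  have "finite (d h)"
    using h H_subset_K finite_d by blast
  then show ?thesis
    using lin_remove[of "d h" "partner h" ref_map] partner_in_d[OF h] ref_map_tail[OF h] by simp
qed

lemma ref_map_subset: "x \<in> K \<Longrightarrow> ref_map x \<subseteq> {c \<in> C. dm c = dm x}"
proof (induction x rule: matching_induct)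
  case (tail h)
  have "h \<in> K"
    using tail.hyps H_subset_K by blast
  have "ref_map (partner h) \<subseteq> (\<Union>y \<in> d h - {partner h}. ref_map y)"
    using ref_map_tail[OF tail.hyps] lin_subset_UN by metis
  also have "\<dots> \<subseteq> {c \<in> C. dm c = dm (partner h)}"
  proof (rule UN_least)
    fix y
    assume y: "y \<in> d h - {partner h}"
    then have "dm y = dm (partner h)"
      using dm_d[OF \<open>h \<in> K\<close>] partner_in_d[OF tail.hyps] by blast
    then show "ref_map y \<subseteq> {c \<in> C. dm c = dm (partner h)}"
      using tail.IH[OF y] by simp
  qed
  finally show ?case .
qed (simp_all add: ref_map_critical ref_map_head)

lemma is_reference_map_ref_map: "is_reference_map K d C H dm ref_map"
  by (simp add: is_reference_map_def ref_map_outside ref_map_subset ref_map_critical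
      ref_map_head lin_ref_map_d_head)

lemma is_reference_map_unique:
  assumes "is_reference_map K d C H dm f"
  shows "f = ref_map"
proof
  fix x
  show "f x = ref_map x"
  proof (cases "x \<in> K")
    case True
    then show ?thesis
    proof (induction x rule: matching_induct)
      case (tail h)
      have "h \<in> K"
        using tail.hyps H_subset_K by blast
      then have "f (partner h) = lin f (d h - {partner h})"
        using assms tail.hyps finite_d partner_in_d
        by (intro lin_eq_emptyD) (simp_all add: is_reference_map_def)
      also have "\<dots> = lin ref_map (d h - {partner h})"
        using tail.IH by (rule lin_cong)
      also have "\<dots> = ref_map (partner h)"
        using ref_map_tail[OF tail.hyps] by simp
      finally show ?case .
    qed (use assms in \<open>simp_all add: is_reference_map_def ref_map_critical ref_map_head\<close>)
  qed (use assms in \<open>simp add: is_reference_map_def ref_map_outside\<close>)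
qed

lemma The_reference_map: "(THE f. is_reference_map K d C H dm f) = ref_map"
  using is_reference_map_ref_map is_reference_map_unique by blast

lemma ref_map_subset_C: "ref_map x \<subseteq> C"
  using ref_map_subset ref_map_outside by (cases "x \<in> K") auto

lemma finite_ref_map: "finite (ref_map x)"
  using ref_map_subset_C C_subset_K finite_subset_K by blast

lemma lin_ref_map_d_lin_ref_map:
  assumes X: "X \<subseteq> K"
    and elem: "\<And>y. y \<in> X \<Longrightarrow> lin ref_map (lin d (ref_map y)) = lin ref_map (d y)"
  shows "lin ref_map (lin d (lin ref_map X)) = lin ref_map (lin d X)"
proof -
  have fin: "finite X" "\<And>y. y \<in> X \<Longrightarrow> finite (d y)"
    using X finite_subset_K finite_d by blast+
  have "ref_map y \<subseteq> K" for y
    using ref_map_subset_C C_subset_K by blast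
  then have fin_d_ref: "finite (lin d (ref_map y))" for y
    using finite_ref_map finite_d by (intro finite_lin) blast+
  have "lin ref_map (lin d (lin ref_map X)) = lin ref_map (lin (\<lambda>y. lin d (ref_map y)) X)"
    using fin(1) finite_ref_map by (simp add: lin_lin)
  also have "\<dots> = lin (\<lambda>y. lin ref_map (lin d (ref_map y))) X"
    using fin(1) fin_d_ref by (simp add: lin_lin)
  also have "\<dots> = lin (\<lambda>y. lin ref_map (d y)) X"
    using elem by (rule lin_cong)
  also have "\<dots> = lin ref_map (lin d X)"
    using fin by (simp add: lin_lin)
  finally show ?thesis .
qed

lemma ref_map_d_ref_map: "x \<in> K \<Longrightarrow> lin ref_map (lin d (ref_map x)) = lin ref_map (d x)"
proof (induction x rule: matching_induct)
  case (head h)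
  then show ?case
    by (simp add: ref_map_head lin_ref_map_d_head)
next
  case (tail h)
  have "h \<in> K"
    using tail.hyps H_subset_K by blast
  let ?R = "d h - {partner h}"
  have "d (partner h) = lin d ?R"
    using \<open>h \<in> K\<close> partner_in_d[OF tail.hyps] by (intro lin_eq_emptyD finite_d d_d)
  moreover have "?R \<subseteq> K"
    using d_subset[OF \<open>h \<in> K\<close>] by blast
  ultimately show ?case
    using lin_ref_map_d_lin_ref_map[of ?R] tail.IH by (simp add: ref_map_tail[OF tail.hyps])
qed (simp add: ref_map_critical)

lemma lin_ref_map_eq_Int_C:
  assumes "X \<subseteq> K" "X \<inter> T = {}"
  shows "lin ref_map X = X \<inter> C"
proof -
  have "lin ref_map X = lin (\<lambda>x. if x \<in> C then {x} else {}) X"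
  proof (rule lin_cong)
    fix x
    assume "x \<in> X"
    then have "x \<in> C \<or> x \<in> H"
      using assms K_cases by blast
    then show "ref_map x = (if x \<in> C then {x} else {})"
      using disjoint by (auto simp: ref_map_critical ref_map_head)
  qed
  also have "\<dots> = X \<inter> C"
  proof (rule Set.set_eqI)
    fix y
    have "{x \<in> X. y \<in> (if x \<in> C then {x} else {})} = (if y \<in> X \<inter> C then {y} else {})"
      by auto
    then show "y \<in> lin (\<lambda>x. if x \<in> C then {x} else {}) X \<longleftrightarrow> y \<in> X \<inter> C"
      by (simp add: lin_def)
  qed
  finally show ?thesis .
qed

lemma mem_lin_cd_iff:
  assumes "x \<in> K" "X \<subseteq> K"
  shows "x \<in> lin cd X \<longleftrightarrow> odd (card (X \<inter> d x))"
proof -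
  have "{y \<in> X. x \<in> cd y} = X \<inter> d x"
    using assms d_iff_cd by blast
  then show ?thesis
    by (simp add: lin_def)
qed

text \<open>\<open>ext_map\<close> is the transpose of \<open>ref_map\<close>; for the matching of the coboundary, whose
  \<open>ref_map\<close> is the coreference map, it is the extension map.\<close>

definition ext_map :: "'a \<Rightarrow> 'a set" where
  "ext_map \<kappa> = {\<nu> \<in> K. \<kappa> \<in> ref_map \<nu>}"

definition ext_space :: "'a set set" where
  "ext_space = {X. X \<subseteq> K \<and> X \<inter> H = {} \<and> lin cd X \<inter> H = {}}"

lemma ext_space_subset_K: "X \<in> ext_space \<Longrightarrow> X \<subseteq> K"
  by (simp add: ext_space_def)

lemma lin_cd_cadd: "X \<subseteq> K \<Longrightarrow> Y \<subseteq> K \<Longrightarrow> lin cd (cadd X Y) = cadd (lin cd X) (lin cd Y)"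
  using finite_subset_K by (simp add: lin_cadd)

lemma z2_subspace_ext_space: "z2_subspace ext_space"
  unfolding z2_subspace_def
proof (intro conjI ballI)
  show "{} \<in> ext_space"
    by (simp add: ext_space_def)
  fix X Y
  assume X: "X \<in> ext_space" and Y: "Y \<in> ext_space"
  then have "lin cd (cadd X Y) = cadd (lin cd X) (lin cd Y)"
    by (intro lin_cd_cadd ext_space_subset_K)
  then show "cadd X Y \<in> ext_space"
    using X Y by (auto simp: ext_space_def cadd_def)
qed

lemma ext_map_in_ext_space: "ext_map \<kappa> \<in> ext_space"
proof -
  have "h \<notin> lin cd (ext_map \<kappa>)" if h: "h \<in> H" for h
  proof -
    have "h \<in> K"
      using h H_subset_K by blast
    have "ext_map \<kappa> \<inter> d h = {\<nu> \<in> d h. \<kappa> \<in> ref_map \<nu>}"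
      using d_subset[OF \<open>h \<in> K\<close>] by (auto simp: ext_map_def)
    moreover have "ext_map \<kappa> \<subseteq> K"
      by (auto simp: ext_map_def)
    ultimately have "h \<in> lin cd (ext_map \<kappa>) \<longleftrightarrow> \<kappa> \<in> lin ref_map (d h)"
      using mem_lin_cd_iff[OF \<open>h \<in> K\<close>] by (simp add: lin_def)
    then show ?thesis
      using lin_ref_map_d_head[OF h] by simp
  qed
  then show ?thesis
    by (auto simp: ext_space_def ext_map_def ref_map_head)
qed

lemma lin_ext_map_in_ext_space: "finite W \<Longrightarrow> lin ext_map W \<in> ext_space"
  by (rule lin_in_z2_subspace[OF z2_subspace_ext_space _ ext_map_in_ext_space])

lemma lin_ext_map_Int_C:
  assumes "W \<subseteq> C"
  shows "lin ext_map W \<inter> C = W"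
proof -
  have "{\<kappa> \<in> W. c \<in> ext_map \<kappa>} = (if c \<in> W then {c} else {})" if c: "c \<in> C" for c
  proof -
    have "c \<in> K"
      using c C_subset_K by blast
    then show ?thesis
      using c by (auto simp: ext_map_def ref_map_critical)
  qed
  then show ?thesis
    using assms by (auto simp: lin_def split: if_split_asm)
qed

lemma dm_lin_ext_map:
  assumes "W \<subseteq> {c \<in> C. dm c = k}" "x \<in> lin ext_map W"
  shows "dm x = k"
  using assms lin_subset_UN[of ext_map W] ref_map_subset by (fastforce simp: ext_map_def)

lemma lin_cd_lin_cd: "X \<subseteq> K \<Longrightarrow> lin cd (lin cd X) = {}"
proof -
  assume "X \<subseteq> K"
  then have "lin cd (lin cd X) = lin (\<lambda>x. lin cd (cd x)) X"
    using finite_subset_K cd_subset by (intro lin_lin) auto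
  also have "\<dots> = {}"
    using \<open>X \<subseteq> K\<close> cd_cd by (simp add: subset_iff cong: lin_cong)
  finally show ?thesis .
qed

lemma lin_cd_in_ext_space: "X \<in> ext_space \<Longrightarrow> lin cd X \<in> ext_space"
  using lin_cd_subset lin_cd_lin_cd by (auto simp: ext_space_def)

text \<open>A chain of \<open>ext_space\<close> with no critical cell consists of tails; a tail \<open>t\<close> of minimal rank
  is then the only cell of the chain in the boundary of its head, so the head lies in the
  coboundary of the chain, which is impossible.\<close>

lemma ext_space_eq_lin_ext_map:
  assumes X: "X \<in> ext_space"
  shows "X = lin ext_map (X \<inter> C)"
proof -
  define Z where "Z = cadd X (lin ext_map (X \<inter> C))"
  have "finite (X \<inter> C)"
    using X finite_subset_K by (auto simp: ext_space_def)
  then have Z: "Z \<in> ext_space"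
    using z2_subspace_ext_space X lin_ext_map_in_ext_space by (simp add: Z_def z2_subspace_def)
  have "Z \<inter> C = {}"
    using lin_ext_map_Int_C[of "X \<inter> C"] by (auto simp: Z_def cadd_def)
  then have Z_T: "Z \<subseteq> T"
    using Z K_cases by (auto simp: ext_space_def)
  have "Z = {}"
  proof (rule ccontr)
    assume "Z \<noteq> {}"
    then obtain t where t: "t \<in> Z" and t_min: "\<And>t'. t' \<in> Z \<Longrightarrow> rk t \<le> rk t'"
      using ex_has_least_nat[of "\<lambda>t. t \<in> Z" _ rk] by blast
    obtain h where h: "h \<in> H" "partner h = t"
      using t Z_T bij_partner by (auto simp: bij_betw_def)
    have "Z \<inter> d h = {t}"
      using t t_min h rk_d_less[OF h(1)] rk_partner[OF h(1)] partner_in_d[OF h(1)]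
      by fastforce
    moreover have "h \<in> K" "Z \<subseteq> K"
      using h(1) Z H_subset_K by (auto simp: ext_space_def)
    ultimately have "h \<in> lin cd Z"
      using mem_lin_cd_iff by simp
    then show False
      using Z h by (auto simp: ext_space_def)
  qed
  then show ?thesis
    by (simp add: Z_def cadd_eq_empty_iff)
qed

end

text \<open>\<open>R.ref_map\<close> is the reference map and \<open>Co.ref_map\<close> the coreference map; the extension
  complex is spanned by \<open>Co.ext_map\<close>.\<close>

locale matching_pair =
  R: acyclic_matching K d cd C H T p rk dm + Co: acyclic_matching K cd d C T H q rk' dm
  for K d cd C H T p rk dm q rk'
begin

definition critical_chains :: "nat \<Rightarrow> 'a set set" where
  "critical_chains k = Pow {c \<in> C. dm c = k}"

definition extension_chains :: "nat \<Rightarrow> 'a set set" where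
  "extension_chains k = lin Co.ext_map ` critical_chains k"

definition crit_d :: "'a set \<Rightarrow> 'a set" where
  "crit_d W = lin R.ref_map (lin d W)"

lemma extension_chains_eq: "extension_chains k = {X \<in> Co.ext_space. \<forall>x\<in>X. dm x = k}"
proof (intro equalityI subsetI)
  fix X
  assume "X \<in> extension_chains k"
  then obtain W where W: "W \<subseteq> {c \<in> C. dm c = k}" and X: "X = lin Co.ext_map W"
    by (auto simp: extension_chains_def critical_chains_def)
  have "finite W"
    using W Co.C_subset_K Co.finite_subset_K by blast
  then show "X \<in> {X \<in> Co.ext_space. \<forall>x\<in>X. dm x = k}"
    using X Co.lin_ext_map_in_ext_space Co.dm_lin_ext_map[OF W] by blast
next
  fix X
  assume X: "X \<in> {X \<in> Co.ext_space. \<forall>x\<in>X. dm x = k}"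
  then have "X = lin Co.ext_map (X \<inter> C)"
    by (simp add: Co.ext_space_eq_lin_ext_map)
  moreover have "X \<inter> C \<in> critical_chains k"
    using X by (auto simp: critical_chains_def)
  ultimately show "X \<in> extension_chains k"
    unfolding extension_chains_def by blast
qed

lemma extension_chains_subset: "extension_chains k \<subseteq> Co.ext_space"
  by (simp add: extension_chains_eq)

lemma lin_d_cadd_extension_chains:
  assumes "X \<in> extension_chains k" "Y \<in> extension_chains k"
  shows "lin d (cadd X Y) = cadd (lin d X) (lin d Y)"
  using assms extension_chains_subset[of k] by (intro Co.lin_cd_cadd Co.ext_space_subset_K) blast+

lemma lin_d_extension_chains:
  assumes dm_d: "\<And>x y. x \<in> K \<Longrightarrow> dm x = k' \<Longrightarrow> y \<in> d x \<Longrightarrow> dm y = k"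
    and X: "X \<in> extension_chains k'"
  shows "lin d X \<in> extension_chains k"
proof -
  have X_ext: "X \<in> Co.ext_space" and X_dm: "\<forall>x\<in>X. dm x = k'"
    using X by (simp_all add: extension_chains_eq)
  moreover have "dm y = k" if y: "y \<in> lin d X" for y
  proof -
    obtain x where x: "x \<in> X" "y \<in> d x"
      using y lin_subset_UN[of d X] by blast
    moreover have "x \<in> K"
      using x(1) Co.ext_space_subset_K[OF X_ext] by blast
    ultimately show ?thesis
      using dm_d X_dm by blast
  qed
  ultimately show ?thesis
    by (simp add: extension_chains_eq Co.lin_cd_in_ext_space)
qed

lemma z2_subspace_extension_chains: "z2_subspace (extension_chains k)"
  unfolding extension_chains_def
proof (rule z2_subspace_image)
  show "z2_subspace (critical_chains k)"
    by (simp add: critical_chains_def z2_subspace_Pow)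
  fix X Y
  assume "X \<in> critical_chains k" "Y \<in> critical_chains k"
  then have "X \<subseteq> K" "Y \<subseteq> K"
    using Co.C_subset_K by (auto simp: critical_chains_def)
  then show "lin Co.ext_map (cadd X Y) = cadd (lin Co.ext_map X) (lin Co.ext_map Y)"
    using Co.finite_subset_K by (simp add: lin_cadd)
qed

lemma Int_C_extension_chains: "(\<lambda>X. X \<inter> C) ` extension_chains k = critical_chains k"
proof -
  have "(\<lambda>X. X \<inter> C) ` extension_chains k = (\<lambda>W. lin Co.ext_map W \<inter> C) ` critical_chains k"
    by (simp add: extension_chains_def image_image)
  also have "\<dots> = (\<lambda>W. W) ` critical_chains k"
    using Co.lin_ext_map_Int_C by (intro image_cong) (auto simp: critical_chains_def)
  finally show ?thesis
    by simp
qed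

lemma inj_on_Int_C: "inj_on (\<lambda>X. X \<inter> C) Co.ext_space"
proof (rule inj_onI)
  fix X Y
  assume "X \<in> Co.ext_space" "Y \<in> Co.ext_space" "X \<inter> C = Y \<inter> C"
  then show "X = Y"
    using Co.ext_space_eq_lin_ext_map by metis
qed

lemma lin_d_Int_C:
  assumes X: "X \<in> Co.ext_space"
  shows "lin d X \<inter> C = crit_d (X \<inter> C)"
proof -
  have lin_ref_map: "lin R.ref_map Y = Y \<inter> C" if "Y \<in> Co.ext_space" for Y
    using that by (intro R.lin_ref_map_eq_Int_C) (auto simp: Co.ext_space_def)
  have "X \<subseteq> K"
    using X by (rule Co.ext_space_subset_K)
  have "lin d X \<inter> C = lin R.ref_map (lin d X)"
    using lin_ref_map Co.lin_cd_in_ext_space[OF X] by simp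
  also have "\<dots> = lin R.ref_map (lin d (lin R.ref_map X))"
    using R.lin_ref_map_d_lin_ref_map[OF \<open>X \<subseteq> K\<close>] R.ref_map_d_ref_map \<open>X \<subseteq> K\<close> by auto
  also have "\<dots> = crit_d (X \<inter> C)"
    using lin_ref_map[OF X] by (simp add: crit_d_def)
  finally show ?thesis .
qed

lemma Int_C_cycles:
  "(\<lambda>X. X \<inter> C) ` {X \<in> extension_chains k. lin d X = {}} = {W \<in> critical_chains k. crit_d W = {}}"
proof (intro equalityI subsetI)
  fix W
  assume "W \<in> (\<lambda>X. X \<inter> C) ` {X \<in> extension_chains k. lin d X = {}}"
  then obtain X where X: "X \<in> extension_chains k" "lin d X = {}" "W = X \<inter> C"
    by blast
  have "W \<in> critical_chains k"
    using X Int_C_extension_chains[of k] by blast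
  moreover have "crit_d W = {}"
    using X lin_d_Int_C[of X] extension_chains_subset[of k] by auto
  ultimately show "W \<in> {W \<in> critical_chains k. crit_d W = {}}"
    by simp
next
  fix W
  assume W: "W \<in> {W \<in> critical_chains k. crit_d W = {}}"
  then obtain X where X: "X \<in> extension_chains k" "W = X \<inter> C"
    using Int_C_extension_chains[of k] by (metis (no_types, lifting) imageE mem_Collect_eq)
  then have "X \<in> Co.ext_space"
    using extension_chains_subset by blast
  then have "lin d X = lin Co.ext_map (lin d X \<inter> C)"
    by (intro Co.ext_space_eq_lin_ext_map Co.lin_cd_in_ext_space)
  also have "\<dots> = {}"
    using lin_d_Int_C[OF \<open>X \<in> Co.ext_space\<close>] W X(2) by simp
  finally show "W \<in> (\<lambda>X. X \<inter> C) ` {X \<in> extension_chains k. lin d X = {}}"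
    using X by blast
qed

lemma Int_C_boundaries: "(\<lambda>X. X \<inter> C) ` lin d ` extension_chains k = crit_d ` critical_chains k"
proof -
  have "(\<lambda>X. X \<inter> C) ` lin d ` extension_chains k = (\<lambda>X. crit_d (X \<inter> C)) ` extension_chains k"
    unfolding image_image using lin_d_Int_C extension_chains_subset by (intro image_cong) auto
  also have "\<dots> = crit_d ` critical_chains k"
    using Int_C_extension_chains by (metis image_image)
  finally show ?thesis .
qed

theorem cycles_Mod_boundaries_iso:
  assumes dm_d: "\<And>x y. x \<in> K \<Longrightarrow> dm x = k' \<Longrightarrow> y \<in> d x \<Longrightarrow> dm y = k"
  shows "chain_grp {X \<in> extension_chains k. lin d X = {}} Mod (lin d ` extension_chains k') \<cong>
    chain_grp {W \<in> critical_chains k. crit_d W = {}} Mod (crit_d ` critical_chains k')"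
proof -
  let ?Z = "{X \<in> extension_chains k. lin d X = {}}" and ?B = "lin d ` extension_chains k'"
  have Z: "z2_subspace ?Z"
    using z2_subspace_extension_chains lin_d_cadd_extension_chains by (rule z2_subspace_kernel)
  have B: "z2_subspace ?B"
    using z2_subspace_extension_chains lin_d_cadd_extension_chains by (rule z2_subspace_image)
  have B_Z: "?B \<subseteq> ?Z"
  proof
    fix Y
    assume "Y \<in> ?B"
    then obtain X where X: "X \<in> extension_chains k'" and Y: "Y = lin d X"
      by blast
    have "lin d (lin d X) = {}"
      using X extension_chains_subset Co.ext_space_subset_K by (intro Co.lin_cd_lin_cd) blast
    then show "Y \<in> ?Z"
      using lin_d_extension_chains[OF dm_d X] Y by simp
  qed
  have "inj_on (\<lambda>X. X \<inter> C) ?Z"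
    using extension_chains_subset by (blast intro: inj_on_subset[OF inj_on_Int_C])
  then have "chain_grp ?Z Mod ?B \<cong> chain_grp ((\<lambda>X. X \<inter> C) ` ?Z) Mod ((\<lambda>X. X \<inter> C) ` ?B)"
    by (rule chain_grp_Mod_iso[OF Z B B_Z]) (simp add: cadd_Int)
  then show ?thesis
    by (simp add: Int_C_cycles Int_C_boundaries)
qed

end

section \<open>Simplicial complexes\<close>

lemma simplicial_complexD:
  assumes "simplicial_complex K"
  shows "finite K" and "x \<in> K \<Longrightarrow> x \<noteq> {}" and "x \<in> K \<Longrightarrow> finite x"
    and "x \<in> K \<Longrightarrow> y \<noteq> {} \<Longrightarrow> y \<subseteq> x \<Longrightarrow> y \<in> K"
  using assms unfolding simplicial_complex_def by blast+

lemma card_between_eq_2: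
  assumes "finite lo" "lo \<subseteq> hi" "card hi = Suc (Suc (card lo))"
  shows "card {r. lo \<subset> r \<and> r \<subset> hi \<and> card r = Suc (card lo)} = 2"
proof -
  have "card (hi - lo) = 2"
    using card_Diff_subset[OF assms(1,2)] assms(3) by simp
  then obtain a b where ab: "hi - lo = {a, b}" "a \<noteq> b"
    by (meson card_2_iff)
  have "{r. lo \<subset> r \<and> r \<subset> hi \<and> card r = Suc (card lo)} = {insert a lo, insert b lo}"
  proof (intro equalityI subsetI)
    fix r
    assume r: "r \<in> {r. lo \<subset> r \<and> r \<subset> hi \<and> card r = Suc (card lo)}"
    then have "card (r - lo) = 1"
      using card_Diff_subset[OF assms(1), of r] by (simp add: psubset_imp_subset)
    then obtain x where x: "r - lo = {x}"
      by (metis One_nat_def card_1_singleton_iff)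
    then have "r = insert x lo" "x \<in> hi - lo"
      using r by blast+
    then show "r \<in> {insert a lo, insert b lo}"
      using ab by auto
  next
    fix r
    assume "r \<in> {insert a lo, insert b lo}"
    then obtain x where x: "x \<in> hi - lo" "r = insert x lo"
      using ab by blast
    then have "card r = Suc (card lo)"
      using assms(1) by simp
    moreover have "r \<noteq> hi"
      using calculation assms(3) by auto
    ultimately show "r \<in> {r. lo \<subset> r \<and> r \<subset> hi \<and> card r = Suc (card lo)}"
      using x assms(2) by blast
  qed
  moreover have "insert a lo \<noteq> insert b lo"
    using ab by blast
  ultimately show ?thesis
    by simp
qed

lemma card_middle_simplices:
  assumes K: "simplicial_complex K" and hi: "hi \<in> K" and lo: "lo \<in> K" "lo \<subseteq> hi"
    and card: "card hi = Suc (Suc (card lo))"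
  shows "card {r \<in> K. lo \<subset> r \<and> r \<subset> hi \<and> card r = Suc (card lo)} = 2"
proof -
  have "{r \<in> K. lo \<subset> r \<and> r \<subset> hi \<and> card r = Suc (card lo)} =
      {r. lo \<subset> r \<and> r \<subset> hi \<and> card r = Suc (card lo)}"
    using simplicial_complexD(4)[OF K hi] by blast
  then show ?thesis
    using card_between_eq_2[OF simplicial_complexD(3)[OF K lo(1)] lo(2) card] by simp
qed

lemma bd_bd:
  assumes K: "simplicial_complex K" and x: "x \<in> K"
  shows "lin (bd K) (bd K x) = {}"
proof -
  have "even (card {r \<in> bd K x. v \<in> bd K r})" for v
  proof (cases "{r \<in> bd K x. v \<in> bd K r} = {}")
    case False
    then have v: "v \<in> K" "v \<subseteq> x" "card x = Suc (Suc (card v))"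
      by (auto simp: bd_def)
    then have "{r \<in> bd K x. v \<in> bd K r} = {r \<in> K. v \<subset> r \<and> r \<subset> x \<and> card r = Suc (card v)}"
      by (auto simp: bd_def)
    then show ?thesis
      using card_middle_simplices[OF K x v] by simp
  qed (metis card.empty even_zero)
  then show ?thesis
    by (simp add: lin_def)
qed

lemma cbd_cbd:
  assumes K: "simplicial_complex K" and x: "x \<in> K"
  shows "lin (cbd K) (cbd K x) = {}"
proof -
  have "even (card {r \<in> cbd K x. v \<in> cbd K r})" for v
  proof (cases "{r \<in> cbd K x. v \<in> cbd K r} = {}")
    case False
    then have v: "v \<in> K" "x \<subseteq> v" "card v = Suc (Suc (card x))"
      by (auto simp: cbd_def)
    then have "{r \<in> cbd K x. v \<in> cbd K r} = {r \<in> K. x \<subset> r \<and> r \<subset> v \<and> card r = Suc (card x)}"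
      by (auto simp: cbd_def)
    then show ?thesis
      using card_middle_simplices[OF K v(1) x v(2,3)] by simp
  qed (metis card.empty even_zero)
  then show ?thesis
    by (simp add: lin_def)
qed

lemma free_pair_card:
  assumes K: "simplicial_complex K" and free: "free_pair K \<sigma> \<tau>"
  shows "card \<tau> = Suc (card \<sigma>)"
proof -
  obtain a where a: "a \<in> \<tau>" "a \<notin> \<sigma>"
    using free by (auto simp: free_pair_def)
  have "insert a \<sigma> \<in> K"
    using free a simplicial_complexD(4)[OF K] by (auto simp: free_pair_def)
  then have "insert a \<sigma> = \<tau>"
    using free a by (auto simp: free_pair_def)
  moreover have "finite \<sigma>"
    using free simplicial_complexD(3)[OF K] by (auto simp: free_pair_def)
  ultimately show ?thesis
    using a by auto
qed

section \<open>Morse sequences\<close>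

locale morse_sequence =
  fixes K :: "'v set set" and Ks :: "'v set set list"
  assumes simplicial: "simplicial_complex K" and morse: "morse_seq K Ks"
begin

definition expansion_step :: "nat \<Rightarrow> 'v set \<Rightarrow> 'v set \<Rightarrow> bool" where
  "expansion_step i \<sigma> \<tau> \<longleftrightarrow> Suc i < length Ks \<and> elem_expansion (Ks ! i) (Ks ! Suc i) \<sigma> \<tau>"

definition filling_step :: "nat \<Rightarrow> 'v set \<Rightarrow> bool" where
  "filling_step i \<nu> \<longleftrightarrow> Suc i < length Ks \<and> elem_filling (Ks ! i) (Ks ! Suc i) \<nu>"

lemma step_cases: "Suc i < length Ks \<Longrightarrow> (\<exists>\<sigma> \<tau>. expansion_step i \<sigma> \<tau>) \<or> (\<exists>\<nu>. filling_step i \<nu>)"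
  using morse by (simp add: morse_seq_def expansion_step_def filling_step_def)

lemma expansion_stepD:
  assumes "expansion_step i \<sigma> \<tau>"
  shows "Suc i < length Ks" "Ks ! Suc i - Ks ! i = {\<sigma>, \<tau>}" "\<sigma> \<subset> \<tau>"
    "free_pair (Ks ! Suc i) \<sigma> \<tau>" "simplicial_complex (Ks ! Suc i)"
  using assms by (auto simp: expansion_step_def elem_expansion_def free_pair_def)

lemma filling_stepD:
  assumes "filling_step i \<nu>"
  shows "Suc i < length Ks" "Ks ! Suc i - Ks ! i = {\<nu>}"
  using assms by (auto simp: filling_step_def elem_filling_def facet_def)

lemma Ks_Suc:
  assumes "Suc i < length Ks"
  shows "Ks ! i \<subseteq> Ks ! Suc i" "simplicial_complex (Ks ! Suc i)"
  using step_cases[OF assms]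
  by (auto simp: expansion_step_def elem_expansion_def filling_step_def elem_filling_def)

lemma Ks_mono: "i \<le> j \<Longrightarrow> j < length Ks \<Longrightarrow> Ks ! i \<subseteq> Ks ! j"
proof (induction j rule: dec_induct)
  case (step m)
  then show ?case
    using Ks_Suc(1)[of m] by auto
qed simp

lemma Ks_first: "Ks ! 0 = {}" and Ks_last: "Ks ! (length Ks - 1) = K"
  and length_Ks: "0 < length Ks"
  using morse by (auto simp: morse_seq_def hd_conv_nth last_conv_nth)

lemma Ks_subset_K: "i < length Ks \<Longrightarrow> Ks ! i \<subseteq> K"
  using Ks_mono[of i "length Ks - 1"] Ks_last by simp

definition stage :: "'v set \<Rightarrow> nat" where
  "stage v = (LEAST i. v \<in> Ks ! Suc i)"

lemma stage_less:
  assumes "v \<in> Ks ! j"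
  shows "stage v < j"
proof (cases j)
  case (Suc i)
  then have "stage v \<le> i"
    using assms unfolding stage_def by (intro Least_le) simp
  then show ?thesis
    using Suc by simp
qed (use assms Ks_first in simp)

lemma stage_added:
  assumes "v \<in> K"
  shows "Suc (stage v) < length Ks" "v \<in> Ks ! Suc (stage v) - Ks ! stage v"
proof -
  have "v \<in> Ks ! (length Ks - 1)"
    using assms Ks_last by simp
  then have "stage v < length Ks - 1"
    using stage_less length_Ks by simp
  then show "Suc (stage v) < length Ks"
    by simp
  have "\<exists>i. v \<in> Ks ! Suc i"
  proof (cases "length Ks - 1")
    case 0
    then show ?thesis
      using \<open>v \<in> Ks ! (length Ks - 1)\<close> Ks_first by simp
  next
    case (Suc i)
    then show ?thesis
      using \<open>v \<in> Ks ! (length Ks - 1)\<close> by auto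
  qed
  then have "v \<in> Ks ! Suc (stage v)"
    unfolding stage_def by (rule LeastI_ex)
  moreover have "v \<notin> Ks ! stage v"
  proof (cases "stage v")
    case (Suc i)
    then show ?thesis
      using not_less_Least[of i "\<lambda>i. v \<in> Ks ! Suc i"] by (simp add: stage_def)
  qed (simp add: Ks_first)
  ultimately show "v \<in> Ks ! Suc (stage v) - Ks ! stage v"
    by simp
qed

lemma stage_eqI:
  assumes "Suc i < length Ks" "v \<in> Ks ! Suc i - Ks ! i"
  shows "stage v = i"
proof (rule antisym)
  show "stage v \<le> i"
    using assms stage_less by fastforce
  show "i \<le> stage v"
  proof (rule ccontr)
    assume "\<not> i \<le> stage v"
    then have "Ks ! Suc (stage v) \<subseteq> Ks ! i"
      using assms(1) by (intro Ks_mono) auto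
    moreover have "v \<in> K"
      using assms Ks_subset_K by blast
    ultimately show False
      using stage_added(2)[of v] assms(2) by blast
  qed
qed

lemma expansion_step_stage:
  assumes "expansion_step i \<sigma> \<tau>"
  shows "stage \<sigma> = i" "stage \<tau> = i"
  using stage_eqI[OF expansion_stepD(1)[OF assms]] expansion_stepD(2)[OF assms] by auto

lemma filling_step_stage:
  assumes "filling_step i \<nu>"
  shows "stage \<nu> = i"
  using stage_eqI[OF filling_stepD(1)[OF assms]] filling_stepD(2)[OF assms] by auto

lemma added_at_stage:
  assumes "v \<in> K"
  obtains "filling_step (stage v) v" | \<tau> where "expansion_step (stage v) v \<tau>"
    | \<sigma> where "expansion_step (stage v) \<sigma> v"
proof -
  note new = stage_added(2)[OF assms]
  consider \<sigma> \<tau> where "expansion_step (stage v) \<sigma> \<tau>" | \<nu> where "filling_step (stage v) \<nu>"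
    using step_cases[OF stage_added(1)[OF assms]] by blast
  then show ?thesis
  proof cases
    case (1 \<sigma> \<tau>)
    then have "v = \<sigma> \<or> v = \<tau>"
      using new expansion_stepD(2) by blast
    then show ?thesis
      using 1 that by blast
  next
    case (2 \<nu>)
    then have "v = \<nu>"
      using new filling_stepD(2) by blast
    then show ?thesis
      using 2 that by blast
  qed
qed

lemma expansion_step_unique:
  assumes "expansion_step i \<sigma> \<tau>" "expansion_step i \<sigma>' \<tau>'"
  shows "\<sigma>' = \<sigma> \<and> \<tau>' = \<tau>"
proof -
  have "{\<sigma>', \<tau>'} = {\<sigma>, \<tau>}" "\<sigma> \<subset> \<tau>" "\<sigma>' \<subset> \<tau>'"
    using expansion_stepD(2,3)[OF assms(1)] expansion_stepD(2,3)[OF assms(2)] by simp_all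
  then show ?thesis
    unfolding doubleton_eq_iff by auto
qed

lemma not_expansion_and_filling:
  assumes "expansion_step i \<sigma> \<tau>" "filling_step i \<nu>"
  shows False
proof -
  have "{\<sigma>, \<tau>} = {\<nu>}" "\<sigma> \<subset> \<tau>"
    using expansion_stepD(2,3)[OF assms(1)] filling_stepD(2)[OF assms(2)] by simp_all
  then show False
    by auto
qed

abbreviation "C \<equiv> critical Ks"
abbreviation "Up \<equiv> upper_regular Ks"
abbreviation "Low \<equiv> lower_regular Ks"

lemma critical_iff: "\<nu> \<in> C \<longleftrightarrow> (\<exists>i. filling_step i \<nu>)"
  by (simp add: critical_def filling_step_def)

lemma upper_regular_iff: "\<tau> \<in> Up \<longleftrightarrow> (\<exists>i \<sigma>. expansion_step i \<sigma> \<tau>)"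
  by (auto simp: upper_regular_def expansion_step_def)

lemma lower_regular_iff: "\<sigma> \<in> Low \<longleftrightarrow> (\<exists>i \<tau>. expansion_step i \<sigma> \<tau>)"
  by (auto simp: lower_regular_def expansion_step_def)

lemma expansion_step_in_K:
  assumes "expansion_step i \<sigma> \<tau>"
  shows "\<sigma> \<in> K" "\<tau> \<in> K"
  using expansion_stepD(2)[OF assms] Ks_subset_K[OF expansion_stepD(1)[OF assms]] by auto

lemma filling_step_in_K: "filling_step i \<nu> \<Longrightarrow> \<nu> \<in> K"
  using filling_stepD(1,2) Ks_subset_K by blast

lemma K_eq_partition: "K = C \<union> Up \<union> Low"
proof (intro equalityI subsetI)
  fix v
  assume "v \<in> K"
  then show "v \<in> C \<union> Up \<union> Low"
    by (cases rule: added_at_stage) (auto simp: critical_iff upper_regular_iff lower_regular_iff)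
next
  fix v
  assume "v \<in> C \<union> Up \<union> Low"
  then show "v \<in> K"
    using expansion_step_in_K filling_step_in_K
    by (auto simp: critical_iff upper_regular_iff lower_regular_iff)
qed

lemma partition_disjoint: "C \<inter> Up = {}" "C \<inter> Low = {}" "Up \<inter> Low = {}"
proof (safe intro!: equals0I)
  fix v
  assume "v \<in> C" "v \<in> Up"
  then obtain i j \<sigma> where i: "filling_step i v" and j: "expansion_step j \<sigma> v"
    by (auto simp: critical_iff upper_regular_iff)
  have "i = j"
    using filling_step_stage[OF i] expansion_step_stage(2)[OF j] by simp
  then show False
    using not_expansion_and_filling i j by blast
next
  fix v
  assume "v \<in> C" "v \<in> Low"
  then obtain i j \<tau> where i: "filling_step i v" and j: "expansion_step j v \<tau>"
    by (auto simp: critical_iff lower_regular_iff)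
  have "i = j"
    using filling_step_stage[OF i] expansion_step_stage(1)[OF j] by simp
  then show False
    using not_expansion_and_filling i j by blast
next
  fix v
  assume "v \<in> Up" "v \<in> Low"
  then obtain i j \<sigma> \<tau> where i: "expansion_step i \<sigma> v" and j: "expansion_step j v \<tau>"
    by (auto simp: upper_regular_iff lower_regular_iff)
  have "i = j"
    using expansion_step_stage(2)[OF i] expansion_step_stage(1)[OF j] by simp
  then have "v = \<sigma>"
    using expansion_step_unique[OF i] j by blast
  then show False
    using expansion_stepD(3)[OF i] by blast
qed

definition lower_partner :: "'v set \<Rightarrow> 'v set" where
  "lower_partner \<tau> = (THE \<sigma>. \<exists>i. expansion_step i \<sigma> \<tau>)"

lemma lower_partner_eq:
  assumes "expansion_step i \<sigma> \<tau>"
  shows "lower_partner \<tau> = \<sigma>"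
  unfolding lower_partner_def
proof (rule the_equality)
  show "\<exists>i. expansion_step i \<sigma> \<tau>"
    using assms by blast
  fix \<sigma>'
  assume "\<exists>j. expansion_step j \<sigma>' \<tau>"
  then obtain j where j: "expansion_step j \<sigma>' \<tau>"
    by blast
  then have "j = i"
    using expansion_step_stage(2)[OF j] expansion_step_stage(2)[OF assms] by simp
  then show "\<sigma>' = \<sigma>"
    using expansion_step_unique[OF assms] j by blast
qed

lemma bij_lower_partner: "bij_betw lower_partner Up Low"
proof (rule bij_betw_imageI)
  show "inj_on lower_partner Up"
  proof (rule inj_onI)
    fix \<tau> \<tau>'
    assume "\<tau> \<in> Up" "\<tau>' \<in> Up" and eq: "lower_partner \<tau> = lower_partner \<tau>'"
    then obtain i j \<sigma> \<sigma>' where i: "expansion_step i \<sigma> \<tau>" and j: "expansion_step j \<sigma>' \<tau>'"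
      by (auto simp: upper_regular_iff)
    have "\<sigma> = \<sigma>'"
      using eq lower_partner_eq[OF i] lower_partner_eq[OF j] by simp
    then have "i = j"
      using expansion_step_stage(1)[OF i] expansion_step_stage(1)[OF j] by simp
    then show "\<tau> = \<tau>'"
      using expansion_step_unique[OF i] j \<open>\<sigma> = \<sigma>'\<close> by blast
  qed
  show "lower_partner ` Up = Low"
  proof (intro equalityI subsetI)
    fix \<sigma>
    assume "\<sigma> \<in> lower_partner ` Up"
    then obtain i \<sigma>' \<tau> where "expansion_step i \<sigma>' \<tau>" "\<sigma> = lower_partner \<tau>"
      by (auto simp: upper_regular_iff)
    then show "\<sigma> \<in> Low"
      using lower_partner_eq by (auto simp: lower_regular_iff)
  next
    fix \<sigma>
    assume "\<sigma> \<in> Low"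
    then obtain i \<tau> where "expansion_step i \<sigma> \<tau>"
      by (auto simp: lower_regular_iff)
    then show "\<sigma> \<in> lower_partner ` Up"
      using lower_partner_eq by (force simp: upper_regular_iff)
  qed
qed

lemma stage_bd:
  assumes x: "x \<in> K" and y: "y \<in> bd K x"
  shows "stage y \<le> stage x"
proof -
  have x_in: "x \<in> Ks ! Suc (stage x)"
    using stage_added(2)[OF x] by blast
  have "y \<noteq> {}" "y \<subseteq> x"
    using y simplicial_complexD(2)[OF simplicial] by (auto simp: bd_def)
  then have "y \<in> Ks ! Suc (stage x)"
    using simplicial_complexD(4)[OF Ks_Suc(2)[OF stage_added(1)[OF x]] x_in] by blast
  then show ?thesis
    using stage_less by fastforce
qed

lemma stage_bd_eq:
  assumes x: "x \<in> K" and y: "y \<in> bd K x" and eq: "stage y = stage x"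
  shows "x \<in> Up \<and> y = lower_partner x"
proof -
  have "y \<in> K" "y \<subset> x"
    using y by (auto simp: bd_def)
  have new: "y \<in> Ks ! Suc (stage x) - Ks ! stage x"
    using stage_added(2)[OF \<open>y \<in> K\<close>] eq by simp
  from x show ?thesis
  proof (cases rule: added_at_stage)
    case 1
    then show ?thesis
      using new filling_stepD(2)[OF 1] \<open>y \<subset> x\<close> by auto
  next
    case (2 \<tau>)
    then show ?thesis
      using new expansion_stepD(2,3)[OF 2] \<open>y \<subset> x\<close> by auto
  next
    case (3 \<sigma>)
    then have "y = \<sigma>"
      using new expansion_stepD(2)[OF 3] \<open>y \<subset> x\<close> by auto
    then show ?thesis
      using lower_partner_eq[OF 3] 3 by (auto simp: upper_regular_iff)
  qed
qed

lemma expansion_step_bd: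
  assumes "expansion_step i \<sigma> \<tau>"
  shows "\<sigma> \<in> bd K \<tau>"
  using expansion_step_in_K(1)[OF assms] expansion_stepD(3)[OF assms]
    free_pair_card[OF expansion_stepD(5,4)[OF assms]]
  by (simp add: bd_def)

sublocale R: acyclic_matching K "bd K" "cbd K" C Up Low lower_partner stage card
proof
  show "finite K"
    using simplicial by (rule simplicial_complexD(1))
  show "lin (bd K) (bd K x) = {}" if "x \<in> K" for x
    using simplicial that by (rule bd_bd)
  show "lin (cbd K) (cbd K x) = {}" if "x \<in> K" for x
    using simplicial that by (rule cbd_cbd)
  show "K = C \<union> Up \<union> Low"
    by (rule K_eq_partition)
  show "C \<inter> Up = {}" "C \<inter> Low = {}" "Up \<inter> Low = {}"
    by (fact partition_disjoint)+
  show "bij_betw lower_partner Up Low"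
    by (rule bij_lower_partner)
  show "lower_partner h \<in> bd K h" "stage (lower_partner h) = stage h" if "h \<in> Up" for h
  proof -
    obtain i \<sigma> where h: "expansion_step i \<sigma> h"
      using \<open>h \<in> Up\<close> by (auto simp: upper_regular_iff)
    show "lower_partner h \<in> bd K h"
      using expansion_step_bd[OF h] lower_partner_eq[OF h] by simp
    show "stage (lower_partner h) = stage h"
      using expansion_step_stage[OF h] lower_partner_eq[OF h] by simp
  qed
  show "stage y \<le> stage x" if "x \<in> K" "y \<in> bd K x" for x y
    using that by (rule stage_bd)
  show "x \<in> Up \<and> y = lower_partner x" if "x \<in> K" "y \<in> bd K x" "stage y = stage x" for x y
    using that by (rule stage_bd_eq)
qed (auto simp: bd_def cbd_def)

sublocale Co: acyclic_matching K "cbd K" "bd K" C Low Up "inv_into Up lower_partner"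
    "\<lambda>x. Max (stage ` K) - stage x" card
  by (rule R.dual_matching)

sublocale hom: matching_pair K "bd K" "cbd K" C Up Low lower_partner stage card
    "inv_into Up lower_partner" "\<lambda>x. Max (stage ` K) - stage x"
  by (intro matching_pair.intro R.acyclic_matching_axioms Co.acyclic_matching_axioms)

sublocale cohom: matching_pair K "cbd K" "bd K" C Low Up "inv_into Up lower_partner"
    "\<lambda>x. Max (stage ` K) - stage x" card lower_partner stage
  by (intro matching_pair.intro R.acyclic_matching_axioms Co.acyclic_matching_axioms)

lemma card_simplex_pos: "x \<in> K \<Longrightarrow> card x \<noteq> 0"
  using simplicial_complexD(2,3)[OF simplicial] by simp

lemma graded_critical_iff:
  "(\<forall>p. \<forall>\<sigma>\<in>simplices K p. f \<sigma> \<in> crit_chains K Ks p) \<longleftrightarrow> (\<forall>x\<in>K. f x \<subseteq> {c \<in> C. card c = card x})"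
proof
  assume graded: "\<forall>p. \<forall>\<sigma>\<in>simplices K p. f \<sigma> \<in> crit_chains K Ks p"
  show "\<forall>x\<in>K. f x \<subseteq> {c \<in> C. card c = card x}"
  proof
    fix x
    assume "x \<in> K"
    then obtain p where p: "card x = Suc p"
      using card_simplex_pos not0_implies_Suc by blast
    then have "x \<in> simplices K p"
      using \<open>x \<in> K\<close> by (simp add: simplices_def)
    then have "f x \<in> crit_chains K Ks p"
      using graded by blast
    then show "f x \<subseteq> {c \<in> C. card c = card x}"
      unfolding p by (auto simp: crit_chains_def simplices_def)
  qed
next
  assume "\<forall>x\<in>K. f x \<subseteq> {c \<in> C. card c = card x}"
  then show "\<forall>p. \<forall>\<sigma>\<in>simplices K p. f \<sigma> \<in> crit_chains K Ks p"
    using R.C_subset_K by (fastforce simp: crit_chains_def simplices_def)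
qed

lemma reference_eq: "reference K Ks = R.ref_map"
proof -
  have "is_reference K Ks = is_reference_map K (bd K) C Up card"
    by (simp add: fun_eq_iff is_reference_def is_reference_map_def graded_critical_iff)
  then show ?thesis
    by (simp add: reference_def R.The_reference_map)
qed

lemma coreference_eq: "coreference K Ks = Co.ref_map"
proof -
  have "is_coreference K Ks = is_reference_map K (cbd K) C Low card"
    by (simp add: fun_eq_iff is_coreference_def is_reference_map_def graded_critical_iff)
  then show ?thesis
    by (simp add: coreference_def Co.The_reference_map)
qed

lemma crit_chains_eq: "crit_chains K Ks p = hom.critical_chains (Suc p)"
  using R.C_subset_K by (auto simp: crit_chains_def hom.critical_chains_def simplices_def)

lemma critical_chains_0: "hom.critical_chains 0 = {{}}"
proof -
  have "{c \<in> C. card c = 0} = {}"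
    using R.C_subset_K card_simplex_pos by blast
  then show ?thesis
    by (simp add: hom.critical_chains_def)
qed

lemma homology_iso:
  "homology (ext_chains K Ks) (lin (bd K)) p \<cong> homology (crit_chains K Ks) (crit_bd K Ks) p"
proof -
  have "ext_ref K Ks = Co.ext_map"
    by (simp add: fun_eq_iff ext_ref_def Co.ext_map_def coreference_eq)
  then have "ext_chains K Ks q = hom.extension_chains (Suc q)" for q
    by (simp add: ext_chains_def hom.extension_chains_def crit_chains_eq)
  moreover have "crit_bd K Ks = hom.crit_d"
    by (simp add: fun_eq_iff crit_bd_def hom.crit_d_def reference_eq)
  ultimately show ?thesis
    using hom.cycles_Mod_boundaries_iso[of "Suc (Suc p)" "Suc p"]
    by (simp add: homology_def crit_chains_eq bd_def)
qed

lemma cohomology_iso: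
  "cohomology (coext_chains K Ks) (lin (cbd K)) p \<cong> cohomology (crit_chains K Ks) (crit_cbd K Ks) p"
proof -
  have "ext_coref K Ks = R.ext_map"
    by (simp add: fun_eq_iff ext_coref_def R.ext_map_def reference_eq)
  then have coext: "coext_chains K Ks q = cohom.extension_chains (Suc q)" for q
    by (simp add: coext_chains_def cohom.extension_chains_def crit_chains_eq)
  have crit_d: "crit_cbd K Ks = cohom.crit_d"
    by (simp add: fun_eq_iff crit_cbd_def cohom.crit_d_def coreference_eq)
  have coboundaries: "(if p = 0 then {{}} else lin (cbd K) ` coext_chains K Ks (p - 1)) =
      lin (cbd K) ` cohom.extension_chains p"
    using critical_chains_0
    by (cases p) (simp_all add: coext cohom.extension_chains_def)
  have crit_coboundaries: "(if p = 0 then {{}} else crit_cbd K Ks ` crit_chains K Ks (p - 1)) =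
      cohom.crit_d ` cohom.critical_chains p"
    using critical_chains_0
    by (cases p) (simp_all add: crit_d crit_chains_eq cohom.crit_d_def)
  show ?thesis
    unfolding cohomology_def coboundaries crit_coboundaries
    unfolding coext crit_d crit_chains_eq
    using cohom.cycles_Mod_boundaries_iso[of p "Suc p"] by (simp add: cbd_def)
qed

end

theorem theorem11:
  fixes K :: "'v set set" and Ks :: "'v set set list"
  assumes "simplicial_complex K" and "morse_seq K Ks"
  shows "\<forall>p. homology (ext_chains K Ks) (lin (bd K)) p \<cong> homology (crit_chains K Ks) (crit_bd K Ks) p
           \<and> cohomology (coext_chains K Ks) (lin (cbd K)) p \<cong> cohomology (crit_chains K Ks) (crit_cbd K Ks) p"
proof -
  interpret morse_sequence K Ks
    using assms by (rule morse_sequence.intro)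
  show ?thesis
    using homology_iso cohomology_iso by blast
qed

end
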